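(* There exists a family of MDPs $(\mathcal{M}_n)_{n\ge1}$ such that for each $n$ there are a trace $\tau$ and a state-risk function $r$ of $\mathcal{M}_n$ such that, with $B:=V(\mathsf{est}_{\mathsf{MDP}}(\tau))$, we have $|B|=2^n$, and for every $\mathsf{bel}\in B$ there exists $\tau'\in\mathsf{Z}^+$ with $R_r(\tau\cdot\tau')>\sup_{\mathsf{bel}''\in B'}\sum_{s}\mathsf{bel}''(s)\cdot r(s)$, where $B'=\mathsf{est}^{\mathsf{up}}(B\setminus\{\mathsf{bel}\},\tau')$.
   Context: An MDP is a tuple $\langle S,\iota,\mathsf{Act},P,\mathsf{Z},\mathsf{obs}\rangle$: finite state set $S$, initial distribution $\iota\in\mathsf{Distr}(S)$, finite action set $\mathsf{Act}$, partial transition function $P\colon S\times\mathsf{Act}\rightharpoonup\mathsf{Distr}(S)$ (write $P(s,\alpha,s')=P(s,\alpha)(s')$), finite observation set $\mathsf{Z}$, observation function $\mathsf{obs}\colon S\to\mathsf{Distr}(\mathsf{Z})$; $\mathsf{AvAct}(s)=\{\alpha\mid P(s,\alpha)\text{ defined}\}\neq\emptyset$. A finite path is $\pi=s_0a_0\dots a_{n-1}s_n$ with $\iota(s_0)>0$, $P(s_i,a_i)(s_{i+1})>0$; $\mathrm{last}(\pi)=s_n$. A scheduler $\sigma$ maps each finite path $\pi$ to a distribution on $\mathsf{AvAct}(\mathrm{last}(\pi))$; $\Sigma$ is the set of schedulers; $\Pr^\sigma(\pi)=\iota(s_0)\prod_{i<n}\sigma(s_0a_0\dots s_i)(a_i)P(s_i,a_i)(s_{i+1})$.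 For a trace $\tau=z_0\dots z_n$ and path $\pi=s_0\dots s_m$, $\Pr(\tau\mid\pi)=\prod_{i=0}^n\mathsf{obs}(s_i)(z_i)$ if $m=n$, else $0$; $\mathrm{Paths}(\tau)$ are the paths with as many states as $\tau$ has observations; $\Pr^\sigma(\tau)=\sum_\pi\Pr^\sigma(\pi)\Pr(\tau\mid\pi)$; $\Pr^\sigma(\pi\mid\tau)=\Pr(\tau\mid\pi)\Pr^\sigma(\pi)/\Pr^\sigma(\tau)$ ($0/0=0$). For $r\colon S\to\mathbb{R}_{\ge0}$, $R_r(\tau)=\sup_{\sigma\in\Sigma}\sum_{\pi\in\mathrm{Paths}(\tau)}\Pr^\sigma(\pi\mid\tau)r(\mathrm{last}(\pi))$. Beliefs: $\mathsf{Bel}=\mathsf{Distr}(S)\cup\{\mathbf{0}\}$ in $\mathbb{R}^S$. For $\mathsf{bel}\in\mathsf{Bel}$, $z\in\mathsf{Z}$: $\mathsf{bel}'\in\mathsf{est}^{\mathsf{up}}(\mathsf{bel},z)$ iff there is $\varsigma\colon S\to\mathsf{Distr}(\mathsf{Act})$ with $\varsigma(s)$ supported in $\mathsf{AvAct}(s)$ and $\mathsf{bel}'(s')=\dfrac{\sum_s\mathsf{bel}(s)\sum_\alpha\varsigma(s)(\alpha)P(s,\alpha,s')\mathsf{obs}(s')(z)}{\sum_s\mathsf{bel}(s)\sum_\alpha\varsigma(s)(\alpha)\sum_{\hat s}P(s,\alpha,\hat s)\mathsf{obs}(\hat s)(z)}$ ($0/0=0$); for sets, $\mathsf{est}^{\mathsf{up}}(B,z)=\bigcup_{\mathsf{bel}\in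 B}\mathsf{est}^{\mathsf{up}}(\mathsf{bel},z)$, and for traces $\mathsf{est}^{\mathsf{up}}(B,z\cdot\tau'')=\mathsf{est}^{\mathsf{up}}(\mathsf{est}^{\mathsf{up}}(B,z),\tau'')$. $\mathsf{est}_{\mathsf{MDP}}(z)=\{b_z\}$ with $b_z(s)=\iota(s)\mathsf{obs}(s)(z)/\sum_{\hat s}\iota(\hat s)\mathsf{obs}(\hat s)(z)$ (or $\mathbf{0}$ if the denominator is $0$), $\mathsf{est}_{\mathsf{MDP}}(\tau\cdot z)=\mathsf{est}^{\mathsf{up}}(\mathsf{est}_{\mathsf{MDP}}(\tau),z)$. $V(B)$ is the set of elements of $B$ that are not convex combinations of other elements of $B$. *)

theory Defs
  imports Complex_Main
begin

text \<open>States, actions and observations are encoded as natural numbers; each MDP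
carries explicit finite carrier sets for them, so that a family of MDPs with
different state spaces can be expressed.\<close>

record mdp =
  St   :: "nat set"
  init :: "nat \<Rightarrow> real"
  Act  :: "nat set"
  P    :: "nat \<Rightarrow> nat \<Rightarrow> (nat \<Rightarrow> real) option"
  Obs  :: "nat set"
  obs  :: "nat \<Rightarrow> nat \<Rightarrow> real"

definition is_distr :: "nat set \<Rightarrow> (nat \<Rightarrow> real) \<Rightarrow> bool" where
  "is_distr A d \<longleftrightarrow> (\<forall>x. d x \<ge> 0) \<and> (\<forall>x. x \<notin> A \<longrightarrow> d x = 0) \<and> (\<Sum>x\<in>A. d x) = 1"

definition AvAct :: "mdp \<Rightarrow> nat \<Rightarrow> nat set" where
  "AvAct M s = {a \<in> Act M. P M s a \<noteq> None}"

definition Ptr :: "mdp \<Rightarrow> nat \<Rightarrow> nat \<Rightarrow> nat \<Rightarrow> real" where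
  "Ptr M s a s' = (case P M s a of None \<Rightarrow> 0 | Some d \<Rightarrow> d s')"

definition is_mdp :: "mdp \<Rightarrow> bool" where
  "is_mdp M \<longleftrightarrow> finite (St M) \<and> St M \<noteq> {} \<and> finite (Act M) \<and> finite (Obs M)
     \<and> is_distr (St M) (init M)
     \<and> (\<forall>s a. (s \<notin> St M \<or> a \<notin> Act M) \<longrightarrow> P M s a = None)
     \<and> (\<forall>s\<in>St M. \<forall>a d. P M s a = Some d \<longrightarrow> is_distr (St M) d)
     \<and> (\<forall>s\<in>St M. AvAct M s \<noteq> {})
     \<and> (\<forall>s\<in>St M. is_distr (Obs M) (obs M s))"

text \<open>A finite path \<open>s0 a0 ... a(n-1) sn\<close> is the pair of the state list
\<open>[s0,...,sn]\<close> and the action list \<open>[a0,...,a(n-1)]\<close>.\<close>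

definition is_path :: "mdp \<Rightarrow> nat list \<Rightarrow> nat list \<Rightarrow> bool" where
  "is_path M ss as \<longleftrightarrow> ss \<noteq> [] \<and> length as = length ss - 1 \<and> set ss \<subseteq> St M
     \<and> init M (ss ! 0) > 0
     \<and> (\<forall>i < length as. P M (ss ! i) (as ! i) \<noteq> None \<and> Ptr M (ss ! i) (as ! i) (ss ! Suc i) > 0)"

definition is_scheduler :: "mdp \<Rightarrow> (nat list \<Rightarrow> nat list \<Rightarrow> nat \<Rightarrow> real) \<Rightarrow> bool" where
  "is_scheduler M \<sigma> \<longleftrightarrow> (\<forall>ss as. is_path M ss as \<longrightarrow> is_distr (AvAct M (last ss)) (\<sigma> ss as))"

definition path_prob :: "mdp \<Rightarrow> (nat list \<Rightarrow> nat list \<Rightarrow> nat \<Rightarrow> real) \<Rightarrow> nat list \<Rightarrow> nat list \<Rightarrow> real" where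
  "path_prob M \<sigma> ss as = init M (ss ! 0) *
     (\<Prod>i<length as. \<sigma> (take (Suc i) ss) (take i as) (as ! i) * Ptr M (ss ! i) (as ! i) (ss ! Suc i))"

definition trace_given_path :: "mdp \<Rightarrow> nat list \<Rightarrow> nat list \<Rightarrow> real" where
  "trace_given_path M \<tau> ss = (if length ss = length \<tau> then (\<Prod>i<length \<tau>. obs M (ss ! i) (\<tau> ! i)) else 0)"

definition Paths :: "mdp \<Rightarrow> nat list \<Rightarrow> (nat list \<times> nat list) set" where
  "Paths M \<tau> = {(ss, as). is_path M ss as \<and> length ss = length \<tau>}"

definition trace_prob :: "mdp \<Rightarrow> (nat list \<Rightarrow> nat list \<Rightarrow> nat \<Rightarrow> real) \<Rightarrow> nat list \<Rightarrow> real" where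
  "trace_prob M \<sigma> \<tau> = (\<Sum>(ss, as)\<in>Paths M \<tau>. path_prob M \<sigma> ss as * trace_given_path M \<tau> ss)"

text \<open>Posterior; note that in Isabelle \<open>x / 0 = 0\<close>, matching the convention \<open>0/0 = 0\<close>.\<close>

definition path_given_trace :: "mdp \<Rightarrow> (nat list \<Rightarrow> nat list \<Rightarrow> nat \<Rightarrow> real) \<Rightarrow> nat list \<Rightarrow> nat list \<Rightarrow> nat list \<Rightarrow> real" where
  "path_given_trace M \<sigma> ss as \<tau> = trace_given_path M \<tau> ss * path_prob M \<sigma> ss as / trace_prob M \<sigma> \<tau>"

definition Risk :: "mdp \<Rightarrow> (nat \<Rightarrow> real) \<Rightarrow> nat list \<Rightarrow> real" where
  "Risk M r \<tau> = (SUP \<sigma> \<in> {\<sigma>. is_scheduler M \<sigma>}.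
      \<Sum>(ss, as)\<in>Paths M \<tau>. path_given_trace M \<sigma> ss as \<tau> * r (last ss))"

text \<open>Beliefs are functions \<open>nat \<Rightarrow> real\<close> vanishing outside the state set.\<close>

definition est_up :: "mdp \<Rightarrow> (nat \<Rightarrow> real) \<Rightarrow> nat \<Rightarrow> (nat \<Rightarrow> real) set" where
  "est_up M bel z = {bel'. \<exists>sch :: nat \<Rightarrow> nat \<Rightarrow> real.
      (\<forall>s\<in>St M. is_distr (AvAct M s) (sch s)) \<and>
      bel' = (\<lambda>s'. if s' \<in> St M then
          (\<Sum>s\<in>St M. bel s * (\<Sum>\<alpha>\<in>Act M. sch s \<alpha> * Ptr M s \<alpha> s' * obs M s' z)) /
          (\<Sum>s\<in>St M. bel s * (\<Sum>\<alpha>\<in>Act M. sch s \<alpha> * (\<Sum>s''\<in>St M. Ptr M s \<alpha> s'' * obs M s'' z)))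
        else 0)}"

definition est_up_set :: "mdp \<Rightarrow> (nat \<Rightarrow> real) set \<Rightarrow> nat \<Rightarrow> (nat \<Rightarrow> real) set" where
  "est_up_set M B z = (\<Union>bel\<in>B. est_up M bel z)"

definition est_up_trace :: "mdp \<Rightarrow> (nat \<Rightarrow> real) set \<Rightarrow> nat list \<Rightarrow> (nat \<Rightarrow> real) set" where
  "est_up_trace M B zs = fold (\<lambda>z B'. est_up_set M B' z) zs B"

definition init_bel :: "mdp \<Rightarrow> nat \<Rightarrow> (nat \<Rightarrow> real)" where
  "init_bel M z = (\<lambda>s. if s \<in> St M then init M s * obs M s z / (\<Sum>s'\<in>St M. init M s' * obs M s' z) else 0)"

text \<open>\<open>est_MDP(z \<cdot> zs) = est_up({b_z}, zs)\<close>, which unfolds the paper's recursion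
\<open>est_MDP(\<tau> \<cdot> z) = est_up(est_MDP(\<tau>), z)\<close>; only nonempty traces are used.\<close>

fun est_MDP :: "mdp \<Rightarrow> nat list \<Rightarrow> (nat \<Rightarrow> real) set" where
  "est_MDP M [] = {}"
| "est_MDP M (z # zs) = est_up_trace M {init_bel M z} zs"

definition convex_comb_of :: "(nat \<Rightarrow> real) set \<Rightarrow> (nat \<Rightarrow> real) \<Rightarrow> bool" where
  "convex_comb_of A b \<longleftrightarrow> (\<exists>F u. finite F \<and> F \<noteq> {} \<and> F \<subseteq> A \<and> (\<forall>x\<in>F. u x \<ge> (0::real))
        \<and> (\<Sum>x\<in>F. u x) = 1 \<and> b = (\<lambda>s. \<Sum>x\<in>F. u x * x s))"

definition Vert :: "(nat \<Rightarrow> real) set \<Rightarrow> (nat \<Rightarrow> real) set" where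
  "Vert B = {b \<in> B. \<not> convex_comb_of (B - {b}) b}"

definition exp_risk :: "mdp \<Rightarrow> (nat \<Rightarrow> real) \<Rightarrow> (nat \<Rightarrow> real) \<Rightarrow> real" where
  "exp_risk M r b = (\<Sum>s\<in>St M. b s * r s)"

end

theory Submission
  imports Defs "HOL-Library.Nat_Bijection"
begin

(*
  M_n consists of n gadgets i < n, each with a start node (stage 0) and four absorbing nodes
  (stages 1-4). A start node is chosen uniformly, and action a leads from it to stage 1 + 2a or
  2 + 2a with probability 1/2 each. Start nodes emit the observation 0; the other nodes emit 0
  with probability 1/2 and otherwise, with probability 2^-n each, the code of every set S such
  that i is in S iff the stage is 1 or 4. The risk is 1 exactly on stages 2 and 4.

  After the trace 0 0, a scheduler playing action 1 in gadget i with probability q_i produces the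
  belief cube_point n q, so the beliefs form an affine image of the cube [0,1]^n whose 2^n
  vertices are the corners q = 1_S. If code S is observed next, the scheduler playing action 1
  exactly in the gadgets i in S only reaches states that are consistent with code S and have
  risk 1, so the trace 0 0 (code S) has risk 1. From any other corner T the scheduler is
  irrelevant and the belief is just conditioned on code S; its risk-1 mass lies on the
  coordinates where S and T agree, so its expected risk is at most (n - 1)/n.
*)

section \<open>Risk of a trace\<close>

lemma is_path_take:
  assumes "is_path M ss as" "i < length as"
  shows "is_path M (take (Suc i) ss) (take i as)"
  using assms unfolding is_path_def
  by (auto dest: in_set_takeD)

lemma AvAct_subset_Act: "AvAct M s \<subseteq> Act M"
  by (auto simp add: AvAct_def)

lemma finite_Paths:
  assumes "is_mdp M"
  shows "finite (Paths M \<tau>)"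
proof -
  have "Paths M \<tau> \<subseteq> {ss. set ss \<subseteq> St M \<and> length ss = length \<tau>}
                    \<times> {as. set as \<subseteq> Act M \<and> length as = length \<tau> - 1}"
  proof safe
    fix ss as a assume "(ss, as) \<in> Paths M \<tau>" "a \<in> set as"
    then obtain i where "is_path M ss as" "i < length as" "a = as ! i"
      by (auto simp: Paths_def in_set_conv_nth)
    then have "P M (ss ! i) a \<noteq> None" by (auto simp: is_path_def)
    then show "a \<in> Act M" using assms by (auto simp: is_mdp_def)
  qed (auto simp: Paths_def is_path_def)
  moreover have "finite ({ss. set ss \<subseteq> St M \<and> length ss = length \<tau>}
                    \<times> {as. set as \<subseteq> Act M \<and> length as = length \<tau> - 1})"
    using assms by (auto simp: is_mdp_def intro!: finite_lists_length_eq)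
  ultimately show ?thesis by (rule finite_subset)
qed

lemma path_prob_nonneg:
  assumes "is_mdp M" "is_scheduler M \<sigma>" "is_path M ss as"
  shows "0 \<le> path_prob M \<sigma> ss as"
proof -
  have "0 \<le> \<sigma> (take (Suc i) ss) (take i as) (as ! i)" if "i < length as" for i
    using assms(2) is_path_take[OF assms(3) that]
    by (auto simp: is_scheduler_def is_distr_def)
  moreover have "0 \<le> Ptr M (ss ! i) (as ! i) (ss ! Suc i)" if "i < length as" for i
    using assms(3) that by (auto simp: is_path_def intro: less_imp_le)
  moreover have "0 \<le> init M (ss ! 0)" using assms(1) by (auto simp: is_mdp_def is_distr_def)
  ultimately show ?thesis
    unfolding path_prob_def by (auto intro!: mult_nonneg_nonneg prod_nonneg)
qed

lemma trace_given_path_nonneg: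
  assumes "is_mdp M" "set ss \<subseteq> St M"
  shows "0 \<le> trace_given_path M \<tau> ss"
proof -
  have "0 \<le> obs M (ss ! i) z" if "i < length ss" for i z
    using assms nth_mem[OF that] by (auto simp: is_mdp_def is_distr_def)
  then show ?thesis by (auto simp: trace_given_path_def intro!: prod_nonneg)
qed

lemma path_prob_length_3:
  "path_prob M \<sigma> [s0, s1, s2] [a0, a1] =
     init M s0 * (\<sigma> [s0] [] a0 * Ptr M s0 a0 s1) * (\<sigma> [s0, s1] [a0] a1 * Ptr M s1 a1 s2)"
  by (simp add: path_prob_def numeral_2_eq_2 mult_ac)

lemma trace_given_path_length_3:
  "trace_given_path M [z0, z1, z2] [s0, s1, s2] = obs M s0 z0 * obs M s1 z1 * obs M s2 z2"
  by (simp add: trace_given_path_def numeral_3_eq_3 mult_ac)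

lemma path_weight_nonneg:
  assumes "is_mdp M" "is_scheduler M \<sigma>" "(ss, as) \<in> Paths M \<tau>"
  shows "0 \<le> path_prob M \<sigma> ss as * trace_given_path M \<tau> ss"
  using assms path_prob_nonneg trace_given_path_nonneg
  by (auto simp: Paths_def is_path_def)

lemma trace_prob_nonneg:
  assumes "is_mdp M" "is_scheduler M \<sigma>"
  shows "0 \<le> trace_prob M \<sigma> \<tau>"
  unfolding trace_prob_def using path_weight_nonneg[OF assms] by (auto intro: sum_nonneg)

definition posterior_risk ::
  "mdp \<Rightarrow> (nat list \<Rightarrow> nat list \<Rightarrow> nat \<Rightarrow> real) \<Rightarrow> (nat \<Rightarrow> real) \<Rightarrow> nat list \<Rightarrow> real" where
  "posterior_risk M \<sigma> r \<tau> = (\<Sum>(ss, as)\<in>Paths M \<tau>. path_given_trace M \<sigma> ss as \<tau> * r (last ss))"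

lemma posterior_risk_eq:
  "posterior_risk M \<sigma> r \<tau> =
     (\<Sum>(ss, as)\<in>Paths M \<tau>. path_prob M \<sigma> ss as * trace_given_path M \<tau> ss * r (last ss))
       / trace_prob M \<sigma> \<tau>"
  unfolding posterior_risk_def path_given_trace_def sum_divide_distrib
  by (intro sum.cong) (auto simp: field_simps)

lemma posterior_risk_le_1:
  assumes "is_mdp M" "is_scheduler M \<sigma>" "\<forall>s\<in>St M. r s \<le> 1"
  shows "posterior_risk M \<sigma> r \<tau> \<le> 1"
proof -
  have "(\<Sum>(ss, as)\<in>Paths M \<tau>. path_prob M \<sigma> ss as * trace_given_path M \<tau> ss * r (last ss))
      \<le> trace_prob M \<sigma> \<tau>"
    unfolding trace_prob_def
  proof (intro sum_mono, clarify)
    fix ss as assume p: "(ss, as) \<in> Paths M \<tau>"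
    then have "last ss \<in> St M" by (auto simp: Paths_def is_path_def)
    then have "r (last ss) \<le> 1" using assms(3) by blast
    then show "path_prob M \<sigma> ss as * trace_given_path M \<tau> ss * r (last ss)
        \<le> path_prob M \<sigma> ss as * trace_given_path M \<tau> ss"
      using path_weight_nonneg[OF assms(1,2) p] by (simp add: mult_left_le)
  qed
  then show ?thesis
    unfolding posterior_risk_eq using trace_prob_nonneg[OF assms(1,2), of \<tau>]
    by (cases "trace_prob M \<sigma> \<tau> = 0") (auto simp: divide_le_eq_1)
qed

lemma posterior_risk_eq_1:
  assumes "0 < trace_prob M \<sigma> \<tau>"
    and "\<forall>(ss, as)\<in>Paths M \<tau>. path_prob M \<sigma> ss as * trace_given_path M \<tau> ss \<noteq> 0 \<longrightarrow> r (last ss) = 1"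
  shows "posterior_risk M \<sigma> r \<tau> = 1"
proof -
  have "(\<Sum>(ss, as)\<in>Paths M \<tau>. path_prob M \<sigma> ss as * trace_given_path M \<tau> ss * r (last ss))
      = trace_prob M \<sigma> \<tau>"
    unfolding trace_prob_def using assms(2) by (intro sum.cong) auto
  then show ?thesis using assms(1) by (simp add: posterior_risk_eq)
qed

lemma Risk_ge_1:
  assumes "is_mdp M" "is_scheduler M \<sigma>" "\<forall>s\<in>St M. r s \<le> 1"
    and "0 < trace_prob M \<sigma> \<tau>"
    and "\<forall>(ss, as)\<in>Paths M \<tau>. path_prob M \<sigma> ss as * trace_given_path M \<tau> ss \<noteq> 0 \<longrightarrow> r (last ss) = 1"
  shows "1 \<le> Risk M r \<tau>"
proof -
  have "Risk M r \<tau> = (SUP \<sigma>\<in>{\<sigma>. is_scheduler M \<sigma>}. posterior_risk M \<sigma> r \<tau>)"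
    by (simp add: Risk_def posterior_risk_def)
  also have "posterior_risk M \<sigma> r \<tau> \<le> \<dots>"
    using assms(2) posterior_risk_le_1[OF assms(1) _ assms(3)]
    by (intro cSUP_upper) (auto intro!: bdd_aboveI2)
  finally show ?thesis using posterior_risk_eq_1[OF assms(4,5)] by simp
qed

section \<open>Belief updates\<close>

definition sched_update ::
  "mdp \<Rightarrow> (nat \<Rightarrow> nat \<Rightarrow> real) \<Rightarrow> (nat \<Rightarrow> real) \<Rightarrow> nat \<Rightarrow> nat \<Rightarrow> real" where
  "sched_update M sch bel z = (\<lambda>s'. if s' \<in> St M then
      (\<Sum>s\<in>St M. bel s * (\<Sum>\<alpha>\<in>Act M. sch s \<alpha> * Ptr M s \<alpha> s' * obs M s' z)) /
      (\<Sum>s\<in>St M. bel s * (\<Sum>\<alpha>\<in>Act M. sch s \<alpha> * (\<Sum>s''\<in>St M. Ptr M s \<alpha> s'' * obs M s'' z)))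
    else 0)"

lemma est_up_eq:
  "est_up M bel z = {sched_update M sch bel z | sch. \<forall>s\<in>St M. is_distr (AvAct M s) (sch s)}"
  by (auto simp: est_up_def sched_update_def)

lemma est_up_nonempty:
  assumes "is_mdp M"
  shows "est_up M bel z \<noteq> {}"
proof -
  define sch where "sch s \<alpha> = (if \<alpha> = (SOME a. a \<in> AvAct M s) then 1 else 0 :: real)" for s \<alpha>
  have "is_distr (AvAct M s) (sch s)" if "s \<in> St M" for s
  proof -
    have "AvAct M s \<noteq> {}" "finite (AvAct M s)"
      using assms that finite_subset[OF AvAct_subset_Act] by (auto simp: is_mdp_def)
    then show ?thesis by (auto simp: is_distr_def sch_def some_in_eq)
  qed
  then show ?thesis unfolding est_up_eq by blast
qed

definition absorbing :: "mdp \<Rightarrow> nat \<Rightarrow> bool" where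
  "absorbing M s \<longleftrightarrow> (\<forall>\<alpha>\<in>AvAct M s. \<forall>t. Ptr M s \<alpha> t = (if t = s then 1 else 0))"

lemma sched_step_absorbing:
  assumes "is_mdp M" "absorbing M s" "is_distr (AvAct M s) d"
  shows "(\<Sum>\<alpha>\<in>Act M. d \<alpha> * Ptr M s \<alpha> t) = (if t = s then 1 else 0)"
proof -
  have "(\<Sum>\<alpha>\<in>Act M. d \<alpha> * Ptr M s \<alpha> t) = (\<Sum>\<alpha>\<in>AvAct M s. d \<alpha> * Ptr M s \<alpha> t)"
    using assms(1,3) AvAct_subset_Act
    by (intro sum.mono_neutral_right) (auto simp: is_mdp_def is_distr_def)
  also have "\<dots> = (\<Sum>\<alpha>\<in>AvAct M s. d \<alpha>) * (if t = s then 1 else 0)"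
    using assms(2) by (auto simp: absorbing_def sum_distrib_right)
  finally show ?thesis using assms(3) by (simp add: is_distr_def)
qed

definition bayes_update :: "mdp \<Rightarrow> (nat \<Rightarrow> real) \<Rightarrow> nat \<Rightarrow> nat \<Rightarrow> real" where
  "bayes_update M bel z =
     (\<lambda>s. if s \<in> St M then bel s * obs M s z / (\<Sum>s'\<in>St M. bel s' * obs M s' z) else 0)"

lemma sched_update_absorbing:
  assumes "is_mdp M" "\<forall>s\<in>St M. bel s \<noteq> 0 \<longrightarrow> absorbing M s"
    and "\<forall>s\<in>St M. is_distr (AvAct M s) (sch s)"
  shows "sched_update M sch bel z = bayes_update M bel z"
proof -
  have step: "bel s * (\<Sum>\<alpha>\<in>Act M. sch s \<alpha> * Ptr M s \<alpha> t) = (if t = s then bel s else 0)"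
    if "s \<in> St M" for s t
    using assms sched_step_absorbing[OF assms(1)] that by (cases "bel s = 0") auto
  have num: "(\<Sum>s\<in>St M. bel s * (\<Sum>\<alpha>\<in>Act M. sch s \<alpha> * Ptr M s \<alpha> s' * obs M s' z))
      = bel s' * obs M s' z" if "s' \<in> St M" for s'
  proof -
    have "(\<Sum>s\<in>St M. bel s * (\<Sum>\<alpha>\<in>Act M. sch s \<alpha> * Ptr M s \<alpha> s' * obs M s' z))
        = (\<Sum>s\<in>St M. bel s * (\<Sum>\<alpha>\<in>Act M. sch s \<alpha> * Ptr M s \<alpha> s') * obs M s' z)"
      by (simp add: sum_distrib_right mult.assoc)
    also have "\<dots> = (\<Sum>s\<in>St M. if s = s' then bel s' * obs M s' z else 0)"
      by (intro sum.cong) (auto simp: step)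
    also have "\<dots> = bel s' * obs M s' z"
      using that assms(1) by (simp add: is_mdp_def)
    finally show ?thesis .
  qed
  have den: "(\<Sum>s\<in>St M. bel s * (\<Sum>\<alpha>\<in>Act M. sch s \<alpha> * (\<Sum>s''\<in>St M. Ptr M s \<alpha> s'' * obs M s'' z)))
      = (\<Sum>s\<in>St M. bel s * obs M s z)"
  proof (intro sum.cong refl)
    fix s assume s: "s \<in> St M"
    have "bel s * (\<Sum>\<alpha>\<in>Act M. sch s \<alpha> * (\<Sum>s''\<in>St M. Ptr M s \<alpha> s'' * obs M s'' z))
        = (\<Sum>s''\<in>St M. bel s * (\<Sum>\<alpha>\<in>Act M. sch s \<alpha> * Ptr M s \<alpha> s'') * obs M s'' z)"
      unfolding sum_distrib_left sum_distrib_right by (subst sum.swap) (simp add: mult_ac)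
    also have "\<dots> = (\<Sum>s''\<in>St M. if s'' = s then bel s * obs M s z else 0)"
      using s by (intro sum.cong) (auto simp: step)
    also have "\<dots> = bel s * obs M s z"
      using s assms(1) by (simp add: is_mdp_def)
    finally show "bel s * (\<Sum>\<alpha>\<in>Act M. sch s \<alpha> * (\<Sum>s''\<in>St M. Ptr M s \<alpha> s'' * obs M s'' z))
        = bel s * obs M s z" .
  qed
  show ?thesis
    by (rule ext) (simp add: sched_update_def bayes_update_def num den)
qed

lemma exp_risk_bayes_update:
  "exp_risk M r (bayes_update M bel z) =
     (\<Sum>s\<in>St M. bel s * obs M s z * r s) / (\<Sum>s\<in>St M. bel s * obs M s z)"
  by (simp add: exp_risk_def bayes_update_def sum_divide_distrib)

lemma card_Pow_mem:
  assumes "finite A" "i \<in> A"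
  shows "card {S \<in> Pow A. i \<in> S \<longleftrightarrow> g} = 2 ^ (card A - 1)"
proof (cases g)
  case True
  have "{S \<in> Pow A. i \<in> S \<longleftrightarrow> g} = insert i ` Pow (A - {i})"
  proof (intro equalityI subsetI)
    fix S assume "S \<in> {S \<in> Pow A. i \<in> S \<longleftrightarrow> g}"
    then show "S \<in> insert i ` Pow (A - {i})"
      using True by (intro image_eqI[of _ _ "S - {i}"]) auto
  qed (use True assms(2) in auto)
  moreover have "inj_on (insert i) (Pow (A - {i}))"
    by (auto simp: inj_on_def)
  ultimately show ?thesis using assms by (simp add: card_image card_Pow card_Diff_singleton)
next
  case False
  then have "{S \<in> Pow A. i \<in> S \<longleftrightarrow> g} = Pow (A - {i})" by auto
  then show ?thesis using assms by (simp add: card_Pow card_Diff_singleton)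
qed

lemma sum_two_points:
  assumes "finite A" "x \<in> A" "y \<in> A" "x \<noteq> y"
  shows "(\<Sum>t\<in>A. (if t = x \<or> t = y then c else 0) * h t) = c * (h x + h y :: real)"
proof -
  have "(\<Sum>t\<in>A. (if t = x \<or> t = y then c else 0) * h t)
      = (\<Sum>t\<in>A. (if t = x then c * h t else 0) + (if t = y then c * h t else 0))"
    using assms(4) by (intro sum.cong) auto
  also have "\<dots> = c * (h x + h y)"
    using assms by (simp add: sum.distrib algebra_simps)
  finally show ?thesis .
qed

lemma convex_comb_attains_max:
  fixes u f :: "'a \<Rightarrow> real"
  assumes "finite F" "\<forall>x\<in>F. 0 \<le> u x" "(\<Sum>x\<in>F. u x) = 1" "\<forall>x\<in>F. f x \<le> m"
    and "(\<Sum>x\<in>F. u x * f x) = m" "x \<in> F" "0 < u x"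
  shows "f x = m"
proof -
  have "(\<Sum>y\<in>F. u y * (m - f y)) = (\<Sum>y\<in>F. m * u y - u y * f y)"
    by (simp add: right_diff_distrib mult.commute)
  also have "\<dots> = m * (\<Sum>y\<in>F. u y) - (\<Sum>y\<in>F. u y * f y)"
    by (simp only: sum_subtractf sum_distrib_left)
  finally have "(\<Sum>y\<in>F. u y * (m - f y)) = 0" using assms(3,5) by simp
  moreover have "\<forall>y\<in>F. 0 \<le> u y * (m - f y)" using assms(2,4) by simp
  ultimately have "u x * (m - f x) = 0"
    using assms(6) sum_nonneg_eq_0_iff[OF assms(1), of "\<lambda>y. u y * (m - f y)"] by simp
  then show ?thesis using assms(7) by simp
qed

lemma convex_comb_attains_min:
  fixes u f :: "'a \<Rightarrow> real"
  assumes "finite F" "\<forall>x\<in>F. 0 \<le> u x" "(\<Sum>x\<in>F. u x) = 1" "\<forall>x\<in>F. m \<le> f x"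
    and "(\<Sum>x\<in>F. u x * f x) = m" "x \<in> F" "0 < u x"
  shows "f x = m"
  using convex_comb_attains_max[OF assms(1-3), of "\<lambda>x. - f x" "- m" x] assms(4-7)
  by (simp add: sum_negf)

section \<open>The cube MDP\<close>

definition node :: "nat \<Rightarrow> nat \<Rightarrow> nat" where
  "node i k = prod_encode (i, k)"

definition node_idx :: "nat \<Rightarrow> nat" where
  "node_idx s = fst (prod_decode s)"

definition node_stage :: "nat \<Rightarrow> nat" where
  "node_stage s = snd (prod_decode s)"

lemma node_idx_node [simp]: "node_idx (node i k) = i"
  and node_stage_node [simp]: "node_stage (node i k) = k"
  and node_idx_stage [simp]: "node (node_idx s) (node_stage s) = s"
  by (simp_all add: node_def node_idx_def node_stage_def)

lemma node_eq_iff [simp]: "node i k = node j l \<longleftrightarrow> i = j \<and> k = l"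
  by (metis node_idx_node node_stage_node)

definition nodes :: "nat \<Rightarrow> nat set" where
  "nodes n = {s. node_idx s < n \<and> node_stage s < 5}"

lemma node_in_nodes [simp]: "node i k \<in> nodes n \<longleftrightarrow> i < n \<and> k < 5"
  by (simp add: nodes_def)

lemma nodes_eq_image: "nodes n = (\<lambda>(i, k). node i k) ` ({..<n} \<times> {..<5})"
proof (intro equalityI subsetI)
  fix s assume "s \<in> nodes n"
  then show "s \<in> (\<lambda>(i, k). node i k) ` ({..<n} \<times> {..<5})"
    by (intro image_eqI[of _ _ "(node_idx s, node_stage s)"]) (auto simp: nodes_def)
qed auto

lemma finite_nodes [simp]: "finite (nodes n)"
  by (simp add: nodes_eq_image)

lemma sum_nodes: "(\<Sum>s\<in>nodes n. f s) = (\<Sum>i<n. \<Sum>k<5. f (node i k))"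
proof -
  have "inj_on (\<lambda>(i, k). node i k) ({..<n} \<times> {..<5})"
    by (auto simp: inj_on_def)
  then show ?thesis
    by (simp add: nodes_eq_image sum.reindex sum.cartesian_product split_def)
qed

definition code :: "nat set \<Rightarrow> nat" where
  "code S = Suc (set_encode S)"

definition decode :: "nat \<Rightarrow> nat set" where
  "decode z = set_decode (z - 1)"

definition codes :: "nat \<Rightarrow> nat set" where
  "codes n = code ` Pow {..<n}"

lemma code_neq_0 [simp]: "code S \<noteq> 0"
  by (simp add: code_def)

lemma decode_code [simp]: "finite S \<Longrightarrow> decode (code S) = S"
  by (simp add: code_def decode_def)

lemma inj_on_code: "inj_on code (Pow {..<n})"
  by (auto simp: inj_on_def code_def finite_subset set_encode_eq)

lemma zero_notin_codes [simp]: "0 \<notin> codes n"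
  by (auto simp: codes_def)

lemma finite_codes [simp]: "finite (codes n)"
  by (simp add: codes_def)

lemma code_in_codes [simp]: "S \<subseteq> {..<n} \<Longrightarrow> code S \<in> codes n"
  by (simp add: codes_def)

definition cube_trans :: "nat \<Rightarrow> nat \<Rightarrow> nat \<Rightarrow> (nat \<Rightarrow> real) option" where
  "cube_trans n s a =
     (if s \<notin> nodes n \<or> a \<notin> {0, 1} then None
      else if node_stage s = 0 then
        Some (\<lambda>t. if t = node (node_idx s) (1 + 2 * a) \<or> t = node (node_idx s) (2 + 2 * a)
                   then 1/2 else 0)
      else if a = 0 then Some (\<lambda>t. if t = s then 1 else 0)
      else None)"

definition cube_obs :: "nat \<Rightarrow> nat \<Rightarrow> nat \<Rightarrow> real" where
  "cube_obs n s z =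
     (if node_stage s = 0 then (if z = 0 then 1 else 0)
      else if z = 0 then 1/2
      else if z \<in> codes n \<and> (node_idx s \<in> decode z \<longleftrightarrow> node_stage s \<in> {1, 4}) then 1 / 2 ^ n
      else 0)"

definition cube_init :: "nat \<Rightarrow> nat \<Rightarrow> real" where
  "cube_init n s = (if s \<in> nodes n \<and> node_stage s = 0 then 1 / n else 0)"

definition cube_mdp :: "nat \<Rightarrow> mdp" where
  "cube_mdp n = \<lparr>St = nodes n, init = cube_init n, Act = {0, 1}, P = cube_trans n,
                 Obs = insert 0 (codes n), obs = cube_obs n\<rparr>"

lemma cube_mdp_simps [simp]:
  "St (cube_mdp n) = nodes n" "init (cube_mdp n) = cube_init n" "Act (cube_mdp n) = {0, 1}"
  "P (cube_mdp n) = cube_trans n" "Obs (cube_mdp n) = insert 0 (codes n)"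
  "obs (cube_mdp n) = cube_obs n"
  by (simp_all add: cube_mdp_def)

lemma Ptr_cube_start:
  "Ptr (cube_mdp n) (node i 0) \<alpha> t =
     (if i < n \<and> \<alpha> \<in> {0, 1} \<and> (t = node i (1 + 2 * \<alpha>) \<or> t = node i (2 + 2 * \<alpha>)) then 1/2 else 0)"
  unfolding Ptr_def cube_mdp_simps cube_trans_def by simp

lemma Ptr_cube_absorbing:
  "s \<in> nodes n \<Longrightarrow> node_stage s \<noteq> 0 \<Longrightarrow>
     Ptr (cube_mdp n) s \<alpha> t = (if \<alpha> = 0 \<and> t = s then 1 else 0)"
  unfolding Ptr_def cube_mdp_simps cube_trans_def by simp

lemma AvAct_cube_mdp:
  assumes "s \<in> nodes n"
  shows "AvAct (cube_mdp n) s = (if node_stage s = 0 then {0, 1} else {0})"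
proof -
  have "cube_trans n s a \<noteq> None \<longleftrightarrow> a \<in> {0, 1} \<and> (node_stage s = 0 \<or> a = 0)" for a
    using assms unfolding cube_trans_def by simp
  then show ?thesis unfolding AvAct_def by auto
qed

lemma cube_obs_distr:
  assumes "n \<ge> 1" "s \<in> nodes n"
  shows "is_distr (insert 0 (codes n)) (cube_obs n s)"
proof (cases "node_stage s = 0")
  case True
  then show ?thesis by (simp add: is_distr_def cube_obs_def)
next
  case False
  let ?g = "node_stage s \<in> {1, 4}"
  have i: "node_idx s \<in> {..<n}" using assms(2) by (simp add: nodes_def)
  have "(\<Sum>z\<in>codes n. cube_obs n s z) = (\<Sum>S\<in>Pow {..<n}. cube_obs n s (code S))"
    by (simp add: codes_def sum.reindex[OF inj_on_code])
  also have "\<dots> = (\<Sum>S\<in>{S \<in> Pow {..<n}. node_idx s \<in> S \<longleftrightarrow> ?g}. 1 / 2 ^ n)"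
    using False by (subst sum.inter_filter) (auto simp: cube_obs_def finite_subset intro!: sum.cong)
  also have "\<dots> = 2 ^ (n - 1) / 2 ^ n"
    using card_Pow_mem[OF _ i, of ?g] by simp
  also have "\<dots> = 1/2"
    using assms(1) by (cases n) (auto simp: field_simps)
  finally show ?thesis
    using False by (auto simp: is_distr_def cube_obs_def)
qed

lemma cube_trans_SomeD:
  "cube_trans n s a = Some d \<Longrightarrow> s \<in> nodes n \<and> a \<in> {0, 1}"
  by (rule ccontr) (simp add: cube_trans_def)

lemma is_mdp_cube_mdp:
  assumes "n \<ge> 1"
  shows "is_mdp (cube_mdp n)"
  unfolding is_mdp_def cube_mdp_simps
proof (intro conjI ballI allI impI)
  show "nodes n \<noteq> {}"
    using assms by (auto dest: equals0D[of _ "node 0 0"])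
  show "is_distr (nodes n) (cube_init n)"
    using assms by (auto simp: is_distr_def sum_nodes cube_init_def)
  show "is_distr (nodes n) d" if d: "cube_trans n s a = Some d" for s a d
  proof (cases "node_stage s = 0")
    case True
    let ?x = "node (node_idx s) (1 + 2 * a)" and ?y = "node (node_idx s) (2 + 2 * a)"
    have s: "s \<in> nodes n" and a: "a \<in> {0, 1}" using cube_trans_SomeD[OF d] by auto
    then have d_eq: "d = (\<lambda>t. if t = ?x \<or> t = ?y then 1/2 else 0)"
      using True d by (simp add: cube_trans_def)
    have "?x \<in> nodes n" "?y \<in> nodes n"
      using s a by (auto simp: nodes_def)
    then have "(\<Sum>t\<in>nodes n. d t * 1) = 1/2 * (1 + 1)"
      unfolding d_eq by (intro sum_two_points) auto
    then show ?thesis using \<open>?x \<in> nodes n\<close> \<open>?y \<in> nodes n\<close>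
      by (auto simp: is_distr_def d_eq)
  next
    case False
    have s: "s \<in> nodes n" using cube_trans_SomeD[OF d] by auto
    have "a = 0" and "d = (\<lambda>t. if t = s then 1 else 0)"
      using d s False by (simp_all add: cube_trans_def split: if_splits)
    then show ?thesis using s by (auto simp: is_distr_def)
  qed
  show "cube_trans n s a = None" if "s \<notin> nodes n \<or> a \<notin> {0, 1}" for s a
    using that by (simp add: cube_trans_def)
  show "AvAct (cube_mdp n) s \<noteq> {}" if "s \<in> nodes n" for s
    using that by (simp add: AvAct_cube_mdp)
  show "is_distr (insert 0 (codes n)) (cube_obs n s)" if "s \<in> nodes n" for s
    using cube_obs_distr[OF assms that] .
  show "finite (nodes n)" "finite {0::nat, 1}" "finite (insert 0 (codes n))"
    by simp_all
qed

section \<open>The beliefs after the trace 0 0\<close>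

definition cube_point :: "nat \<Rightarrow> (nat \<Rightarrow> real) \<Rightarrow> nat \<Rightarrow> real" where
  "cube_point n q s =
     (if s \<in> nodes n \<and> node_stage s \<noteq> 0
      then (if node_stage s \<in> {3, 4} then q (node_idx s) else 1 - q (node_idx s)) / (2 * n)
      else 0)"

definition cube :: "nat \<Rightarrow> (nat \<Rightarrow> real) set" where
  "cube n = {cube_point n q | q. \<forall>i<n. 0 \<le> q i \<and> q i \<le> 1}"

lemma sum_cube_init:
  "(\<Sum>s\<in>nodes n. cube_init n s * f s) = (\<Sum>i<n. f (node i 0)) / n"
proof -
  have "(\<Sum>k<5. cube_init n (node i k) * f (node i k)) = f (node i 0) / n" if "i < n" for i
  proof -
    have "(\<Sum>k<5. cube_init n (node i k) * f (node i k))
        = (\<Sum>k::nat<5. if k = 0 then f (node i 0) / n else 0)"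
      using that by (intro sum.cong) (auto simp: cube_init_def)
    then show ?thesis by simp
  qed
  then show ?thesis by (simp add: sum_nodes sum_divide_distrib)
qed

lemma cube_obs_start_step:
  assumes "i < n" "\<alpha> \<in> {0, 1}"
  shows "(\<Sum>t\<in>nodes n. Ptr (cube_mdp n) (node i 0) \<alpha> t * cube_obs n t 0) = 1/2"
proof -
  let ?x = "node i (1 + 2 * \<alpha>)" and ?y = "node i (2 + 2 * \<alpha>)"
  have "(\<Sum>t\<in>nodes n. Ptr (cube_mdp n) (node i 0) \<alpha> t * cube_obs n t 0)
      = (\<Sum>t\<in>nodes n. (if t = ?x \<or> t = ?y then 1/2 else 0) * cube_obs n t 0)"
    using assms by (simp add: Ptr_cube_start)
  also have "\<dots> = 1/2 * (cube_obs n ?x 0 + cube_obs n ?y 0)"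
    using assms by (intro sum_two_points) auto
  finally show ?thesis by (simp add: cube_obs_def)
qed

lemma cube_init_update_den:
  assumes "n \<ge> 1" "\<forall>i<n. sch (node i 0) 0 + sch (node i 0) 1 = 1"
  shows "(\<Sum>s\<in>nodes n. cube_init n s *
           (\<Sum>\<alpha>\<in>{0, 1}. sch s \<alpha> * (\<Sum>t\<in>nodes n. Ptr (cube_mdp n) s \<alpha> t * cube_obs n t 0)))
         = 1/2"
proof -
  have "(\<Sum>\<alpha>\<in>{0, 1}. sch (node i 0) \<alpha> *
          (\<Sum>t\<in>nodes n. Ptr (cube_mdp n) (node i 0) \<alpha> t * cube_obs n t 0))
      = 1/2" if "i < n" for i
    using assms(2) that by (simp add: cube_obs_start_step flip: distrib_right)
  then have "(\<Sum>s\<in>nodes n. cube_init n s *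
      (\<Sum>\<alpha>\<in>{0, 1}. sch s \<alpha> * (\<Sum>t\<in>nodes n. Ptr (cube_mdp n) s \<alpha> t * cube_obs n t 0)))
      = (\<Sum>i<n. 1/2) / n"
    unfolding sum_cube_init
    by (intro arg_cong[where f = "\<lambda>x. x / n"] sum.cong) (simp_all only: lessThan_iff)
  then show ?thesis using assms(1) by simp
qed

lemma cube_init_update_num:
  assumes "j < n" "k < 5"
  shows "(\<Sum>s\<in>nodes n. cube_init n s *
           (\<Sum>\<alpha>\<in>{0, 1}. sch s \<alpha> * Ptr (cube_mdp n) s \<alpha> (node j k) * cube_obs n (node j k) 0))
         = (if k \<in> {1, 2} then sch (node j 0) 0 else if k \<in> {3, 4} then sch (node j 0) 1 else 0)
             / (4 * n)" (is "_ = ?w / _")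
proof -
  have step: "(\<Sum>\<alpha>\<in>{0, 1}. sch (node i 0) \<alpha> * Ptr (cube_mdp n) (node i 0) \<alpha> (node j k)
                 * cube_obs n (node j k) 0)
      = (if i = j then ?w / 4 else 0)" if "i < n" for i
    using assms that by (auto simp: Ptr_cube_start cube_obs_def)
  have "(\<Sum>s\<in>nodes n. cube_init n s *
      (\<Sum>\<alpha>\<in>{0, 1}. sch s \<alpha> * Ptr (cube_mdp n) s \<alpha> (node j k) * cube_obs n (node j k) 0))
      = (\<Sum>i<n. if i = j then ?w / 4 else 0) / n"
    unfolding sum_cube_init
    by (intro arg_cong[where f = "\<lambda>x. x / n"] sum.cong) (simp_all only: lessThan_iff step)
  also have "\<dots> = ?w / (4 * n)"
    using assms by simp
  finally show ?thesis .
qed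

lemma sched_update_cube_init:
  assumes "n \<ge> 1" "\<forall>i<n. sch (node i 0) 0 + sch (node i 0) 1 = 1"
  shows "sched_update (cube_mdp n) sch (cube_init n) 0 = cube_point n (\<lambda>i. sch (node i 0) 1)"
proof
  fix s'
  show "sched_update (cube_mdp n) sch (cube_init n) 0 s' = cube_point n (\<lambda>i. sch (node i 0) 1) s'"
  proof (cases "s' \<in> nodes n")
    case True
    then obtain j k where s': "s' = node j k" "j < n" "k < 5"
      by (metis node_idx_stage node_in_nodes)
    then show ?thesis
      using assms(2) unfolding s'(1) sched_update_def cube_mdp_simps
        cube_init_update_num[OF s'(2,3)] cube_init_update_den[OF assms]
      by (auto simp: cube_point_def)
  qed (simp add: sched_update_def cube_point_def)
qed

lemma est_up_cube_init:
  assumes "n \<ge> 1"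
  shows "est_up (cube_mdp n) (cube_init n) 0 = cube n"
proof (intro equalityI subsetI)
  fix b assume "b \<in> est_up (cube_mdp n) (cube_init n) 0"
  then obtain sch where sch: "\<forall>s\<in>nodes n. is_distr (AvAct (cube_mdp n) s) (sch s)"
    and b: "b = sched_update (cube_mdp n) sch (cube_init n) 0"
    unfolding est_up_eq by auto
  have "sch (node i 0) 0 + sch (node i 0) 1 = 1 \<and> 0 \<le> sch (node i 0) 1 \<and> sch (node i 0) 1 \<le> 1"
    if "i < n" for i
  proof -
    have "is_distr {0, 1} (sch (node i 0))"
      using sch that by (auto simp: AvAct_cube_mdp dest!: bspec[of _ _ "node i 0"])
    then have "sch (node i 0) 0 + sch (node i 0) 1 = 1"
      and "0 \<le> sch (node i 0) 0" "0 \<le> sch (node i 0) 1"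
      by (auto simp: is_distr_def)
    then show ?thesis by linarith
  qed
  then show "b \<in> cube n"
    unfolding b cube_def using sched_update_cube_init[OF assms] by auto
next
  fix b assume "b \<in> cube n"
  then obtain q where q: "\<forall>i<n. 0 \<le> q i \<and> q i \<le> 1" and b: "b = cube_point n q"
    unfolding cube_def by auto
  define sch :: "nat \<Rightarrow> nat \<Rightarrow> real" where
    "sch s \<alpha> =
       (if node_stage s = 0
        then (if \<alpha> = 0 then 1 - q (node_idx s) else if \<alpha> = 1 then q (node_idx s) else 0)
        else if \<alpha> = 0 then 1 else 0)" for s \<alpha>
  have "\<forall>s\<in>nodes n. is_distr (AvAct (cube_mdp n) s) (sch s)"
    using q by (auto simp: AvAct_cube_mdp is_distr_def sch_def nodes_def)
  moreover have "b = sched_update (cube_mdp n) sch (cube_init n) 0"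
    using sched_update_cube_init[OF assms, of sch] by (simp add: b sch_def)
  ultimately show "b \<in> est_up (cube_mdp n) (cube_init n) 0"
    unfolding est_up_eq by auto
qed

lemma est_MDP_cube_mdp:
  assumes "n \<ge> 1"
  shows "est_MDP (cube_mdp n) [0, 0] = cube n"
proof -
  have obs: "cube_init n s * cube_obs n s 0 = cube_init n s" for s
    by (simp add: cube_init_def cube_obs_def)
  have "(\<Sum>s\<in>nodes n. cube_init n s) = 1"
    using assms sum_cube_init[of n "\<lambda>_. 1"] by simp
  then have "init_bel (cube_mdp n) 0 = cube_init n"
    by (intro ext) (simp add: init_bel_def obs, simp add: cube_init_def)
  then show ?thesis
    using est_up_cube_init[OF assms] by (simp add: est_up_trace_def est_up_set_def)
qed

lemma cube_point_stage3: "i < n \<Longrightarrow> cube_point n q (node i 3) = q i / (2 * n)"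
  by (simp add: cube_point_def)

lemma cube_point_eq_iff: "cube_point n q = cube_point n q' \<longleftrightarrow> (\<forall>i<n. q i = q' i)"
proof
  assume eq: "cube_point n q = cube_point n q'"
  show "\<forall>i<n. q i = q' i"
  proof (intro allI impI)
    fix i assume "i < n"
    then show "q i = q' i" using fun_cong[OF eq, of "node i 3"] by (simp add: cube_point_stage3)
  qed
qed (auto simp: cube_point_def nodes_def)

definition corner :: "nat \<Rightarrow> nat set \<Rightarrow> nat \<Rightarrow> real" where
  "corner n S = cube_point n (\<lambda>i. of_bool (i \<in> S))"

lemma corner_in_cube: "corner n S \<in> cube n"
  unfolding corner_def cube_def by auto

lemma inj_on_corner: "inj_on (corner n) (Pow {..<n})"
  by (auto simp: inj_on_def corner_def cube_point_eq_iff)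

lemma card_corners: "card (corner n ` Pow {..<n}) = 2 ^ n"
  by (simp add: card_image[OF inj_on_corner] card_Pow)

lemma corner_not_convex_comb:
  assumes "S \<subseteq> {..<n}"
  shows "\<not> convex_comb_of (cube n - {corner n S}) (corner n S)"
proof
  assume "convex_comb_of (cube n - {corner n S}) (corner n S)"
  then obtain F u where F: "finite F" "F \<subseteq> cube n - {corner n S}" "\<forall>x\<in>F. 0 \<le> u x"
    "(\<Sum>x\<in>F. u x) = 1" and comb: "corner n S = (\<lambda>s. \<Sum>x\<in>F. u x * x s)"
    unfolding convex_comb_of_def by blast
  have "\<exists>x\<in>F. 0 < u x"
  proof (rule ccontr)
    assume "\<not> (\<exists>x\<in>F. 0 < u x)"
    then have "\<forall>x\<in>F. u x = 0" using F(3) by force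
    then show False using F(4) by simp
  qed
  then obtain x where x: "x \<in> F" "0 < u x" by blast
  then obtain q where q: "x = cube_point n q" using F(2) unfolding cube_def by blast
  have "q i = of_bool (i \<in> S)" if i: "i < n" for i
  proof -
    have "(\<Sum>y\<in>F. u y * y (node i 3)) = of_bool (i \<in> S) / (2 * n)"
      using fun_cong[OF comb, of "node i 3"] i by (simp add: corner_def cube_point_stage3)
    moreover have "\<forall>y\<in>F. 0 \<le> y (node i 3) \<and> y (node i 3) \<le> 1 / (2 * n)"
      using F(2) i by (auto simp: cube_def cube_point_stage3 divide_right_mono)
    ultimately have "x (node i 3) = of_bool (i \<in> S) / (2 * n)"
      using convex_comb_attains_max[OF F(1,3,4), of "\<lambda>y. y (node i 3)" _ x]
        convex_comb_attains_min[OF F(1,3,4), of _ "\<lambda>y. y (node i 3)" x] x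
      by (cases "i \<in> S") auto
    then show ?thesis using i by (simp add: q cube_point_stage3)
  qed
  then have "x = corner n S" by (simp add: q corner_def cube_point_eq_iff)
  then show False using x F(2) by auto
qed

lemma cube_point_convex_comb:
  assumes q: "\<forall>i<n. 0 \<le> q i \<and> q i \<le> 1" and j: "j < n" "q j \<noteq> 0" "q j \<noteq> 1"
  shows "convex_comb_of (cube n - {cube_point n q}) (cube_point n q)"
proof -
  let ?b1 = "cube_point n (q(j := 1))" and ?b0 = "cube_point n (q(j := 0))"
  have ne: "?b1 \<noteq> cube_point n q" "?b0 \<noteq> cube_point n q" "?b1 \<noteq> ?b0"
    using j by (auto simp: cube_point_eq_iff dest!: spec[of _ j])
  have "?b1 \<in> cube n" "?b0 \<in> cube n" using q unfolding cube_def by auto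
  define u where "u x = (if x = ?b1 then q j else 1 - q j)" for x
  have split: "cube_point n q s = q j * ?b1 s + (1 - q j) * ?b0 s" for s
    unfolding cube_point_def
    by (cases "node_idx s = j") (simp_all add: algebra_simps add_divide_distrib diff_divide_distrib)
  have "cube_point n q = (\<lambda>s. \<Sum>x\<in>{?b1, ?b0}. u x * x s)"
    using ne by (intro ext) (simp add: u_def split)
  moreover have "(\<Sum>x\<in>{?b1, ?b0}. u x) = 1" "\<forall>x\<in>{?b1, ?b0}. 0 \<le> u x"
    using ne q j by (auto simp: u_def)
  ultimately show ?thesis
    unfolding convex_comb_of_def using ne \<open>?b1 \<in> cube n\<close> \<open>?b0 \<in> cube n\<close>
    by (intro exI[of _ "{?b1, ?b0}"] exI[of _ u]) auto
qed

lemma Vert_cube: "Vert (cube n) = corner n ` Pow {..<n}"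
proof (intro equalityI subsetI)
  fix b assume "b \<in> Vert (cube n)"
  then obtain q where q: "\<forall>i<n. 0 \<le> q i \<and> q i \<le> 1" and b: "b = cube_point n q"
    and not_comb: "\<not> convex_comb_of (cube n - {b}) b"
    unfolding Vert_def cube_def by blast
  have "\<forall>i<n. q i = of_bool (i \<in> {i. i < n \<and> q i = 1})"
    using cube_point_convex_comb[OF q] not_comb b by fastforce
  then have "b = corner n {i. i < n \<and> q i = 1}"
    by (simp add: b corner_def cube_point_eq_iff)
  then show "b \<in> corner n ` Pow {..<n}" by auto
qed (use corner_not_convex_comb corner_in_cube in \<open>auto simp: Vert_def\<close>)

section \<open>Separation of the vertex beliefs\<close>

definition cube_risk :: "nat \<Rightarrow> real" where
  "cube_risk s = (if node_stage s \<in> {2, 4} then 1 else 0)"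

definition guess_sched :: "nat set \<Rightarrow> nat list \<Rightarrow> nat list \<Rightarrow> nat \<Rightarrow> real" where
  "guess_sched S ss as a =
     (if node_stage (last ss) = 0 then of_bool (a = of_bool (node_idx (last ss) \<in> S))
      else of_bool (a = 0))"

lemma is_scheduler_guess_sched: "is_scheduler (cube_mdp n) (guess_sched S)"
  unfolding is_scheduler_def
proof (intro allI impI)
  fix ss as assume "is_path (cube_mdp n) ss as"
  then have "last ss \<in> nodes n" by (auto simp: is_path_def)
  then show "is_distr (AvAct (cube_mdp n) (last ss)) (guess_sched S ss as)"
    by (auto simp: AvAct_cube_mdp is_distr_def guess_sched_def)
qed

lemma guess_sched_path_hits_risk:
  assumes S: "S \<subseteq> {..<n}" and p: "(ss, as) \<in> Paths (cube_mdp n) [0, 0, code S]"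
    and w: "path_prob (cube_mdp n) (guess_sched S) ss as
              * trace_given_path (cube_mdp n) [0, 0, code S] ss \<noteq> 0"
  shows "cube_risk (last ss) = 1"
proof -
  have path: "is_path (cube_mdp n) ss as" and "length ss = 3" using p by (auto simp: Paths_def)
  then have "length as = 2" by (simp add: is_path_def)
  then obtain s0 s1 s2 a0 a1 where ss: "ss = [s0, s1, s2]" and as: "as = [a0, a1]"
    using \<open>length ss = 3\<close> by (auto simp: numeral_eq_Suc length_Suc_conv)
  have "0 < cube_init n s0"
    and t1: "0 < Ptr (cube_mdp n) s0 a0 s1" and t2: "0 < Ptr (cube_mdp n) s1 a1 s2"
    using path by (auto simp: is_path_def ss as nth_Cons')
  then have "s0 \<in> nodes n" "node_stage s0 = 0"
    by (auto simp: cube_init_def split: if_splits)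
  then obtain i where s0: "s0 = node i 0" "i < n"
    by (metis node_idx_stage node_in_nodes)
  have a0: "a0 = of_bool (i \<in> S)"
    using w s0 by (auto simp: ss as path_prob_length_3 guess_sched_def)
  have s1: "s1 = node i (1 + 2 * a0) \<or> s1 = node i (2 + 2 * a0)"
    using t1 s0 by (auto simp: Ptr_cube_start split: if_splits)
  then have "s2 = s1"
    using t2 s0 a0 by (auto simp: Ptr_cube_absorbing split: if_splits)
  moreover have "cube_obs n s2 (code S) \<noteq> 0"
    using w by (auto simp: ss trace_given_path_length_3)
  ultimately show ?thesis
    using s1 a0 S by (auto simp: ss cube_risk_def cube_obs_def finite_subset)
qed

lemma trace_prob_guess_sched_pos:
  assumes n: "n \<ge> 1" and S: "S \<subseteq> {..<n}"
  shows "0 < trace_prob (cube_mdp n) (guess_sched S) [0, 0, code S]"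
proof -
  define a :: nat where "a = of_bool (0 \<in> S)"
  let ?ss = "[node 0 0, node 0 (2 + 2 * a), node 0 (2 + 2 * a)]" and ?as = "[a, 0]"
  have "a \<in> {0, 1}" by (simp add: a_def)
  then have "is_path (cube_mdp n) ?ss ?as"
    using n by (auto simp: is_path_def cube_init_def Ptr_cube_start Ptr_cube_absorbing nth_Cons'
        cube_trans_def)
  then have p: "(?ss, ?as) \<in> Paths (cube_mdp n) [0, 0, code S]"
    by (simp add: Paths_def)
  have "cube_obs n (node 0 (2 + 2 * a)) (code S) = 1 / 2 ^ n"
    using S n by (auto simp: cube_obs_def a_def finite_subset)
  then have "0 < path_prob (cube_mdp n) (guess_sched S) ?ss ?as
      * trace_given_path (cube_mdp n) [0, 0, code S] ?ss"
    using n \<open>a \<in> {0, 1}\<close>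
    by (auto simp: path_prob_length_3 trace_given_path_length_3 cube_init_def
        Ptr_cube_start Ptr_cube_absorbing guess_sched_def a_def cube_obs_def)
  then show ?thesis
    unfolding trace_prob_def
    using path_weight_nonneg[OF is_mdp_cube_mdp[OF n] is_scheduler_guess_sched]
    by (intro sum_pos2[OF finite_Paths[OF is_mdp_cube_mdp[OF n]] p]) auto
qed

lemma Risk_cube_mdp_ge_1:
  assumes "n \<ge> 1" "S \<subseteq> {..<n}"
  shows "1 \<le> Risk (cube_mdp n) cube_risk [0, 0, code S]"
proof (rule Risk_ge_1[OF is_mdp_cube_mdp[OF assms(1)] is_scheduler_guess_sched])
  show "\<forall>s\<in>St (cube_mdp n). cube_risk s \<le> 1" by (simp add: cube_risk_def)
qed (use guess_sched_path_hits_risk[OF assms(2)] trace_prob_guess_sched_pos[OF assms] in auto)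

lemma absorbing_cube_mdp:
  "s \<in> nodes n \<Longrightarrow> node_stage s \<noteq> 0 \<Longrightarrow> absorbing (cube_mdp n) s"
  by (simp add: absorbing_def AvAct_cube_mdp Ptr_cube_absorbing)

lemma est_up_corner:
  assumes "n \<ge> 1" "b \<in> est_up (cube_mdp n) (corner n T) z"
  shows "b = bayes_update (cube_mdp n) (corner n T) z"
proof -
  have "\<forall>s\<in>St (cube_mdp n). corner n T s \<noteq> 0 \<longrightarrow> absorbing (cube_mdp n) s"
    by (auto simp: corner_def cube_point_def absorbing_cube_mdp)
  then show ?thesis
    using assms sched_update_absorbing[OF is_mdp_cube_mdp] by (auto simp: est_up_eq)
qed

(* In each gadget exactly one node is charged by corner n T and consistent with code S;
   it has risk 1 iff S and T agree on the gadget. *)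
lemma corner_obs_code:
  assumes "S \<subseteq> {..<n}" "i < n"
  shows "(\<Sum>k<5. corner n T (node i k) * cube_obs n (node i k) (code S)) = 1 / (2 * n * 2 ^ n)"
    and "(\<Sum>k<5. corner n T (node i k) * cube_obs n (node i k) (code S) * cube_risk (node i k))
           = of_bool (i \<in> T \<longleftrightarrow> i \<in> S) / (2 * n * 2 ^ n)"
  using assms
  by (auto simp: corner_def cube_point_def cube_obs_def cube_risk_def numeral_eq_Suc finite_subset)

lemma exp_risk_other_corner:
  assumes n: "n \<ge> 1" and S: "S \<subseteq> {..<n}" and T: "T \<subseteq> {..<n}" "T \<noteq> S"
  shows "exp_risk (cube_mdp n) cube_risk (bayes_update (cube_mdp n) (corner n T) (code S))
           \<le> (real n - 1) / n"
proof -
  let ?A = "{..<n} \<inter> {i. i \<in> T \<longleftrightarrow> i \<in> S}"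
  have "exp_risk (cube_mdp n) cube_risk (bayes_update (cube_mdp n) (corner n T) (code S))
      = (\<Sum>i<n. of_bool (i \<in> T \<longleftrightarrow> i \<in> S) / (2 * n * 2 ^ n)) / (\<Sum>i<n. 1 / (2 * n * 2 ^ n))"
    using S by (simp add: exp_risk_bayes_update sum_nodes corner_obs_code)
  also have "\<dots> = card ?A / n"
    using n by (simp add: field_simps flip: sum_divide_distrib)
  also have "\<dots> \<le> (real n - 1) / n"
  proof -
    obtain j where "j < n" "j \<in> T \<longleftrightarrow> j \<notin> S" using S T by blast
    then have "?A \<subset> {..<n}" by blast
    then have "card ?A < n" using psubset_card_mono[of "{..<n}" ?A] by simp
    then show ?thesis by (simp add: divide_right_mono)
  qed
  finally show ?thesis .
qed

lemma Sup_exp_risk_other_corners_lt_Risk: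
  assumes n: "n \<ge> 1" and S: "S \<subseteq> {..<n}"
  shows "Sup (exp_risk (cube_mdp n) cube_risk `
             est_up_trace (cube_mdp n) (corner n ` Pow {..<n} - {corner n S}) [code S])
         < Risk (cube_mdp n) cube_risk ([0, 0] @ [code S])"
proof -
  let ?X = "est_up_trace (cube_mdp n) (corner n ` Pow {..<n} - {corner n S}) [code S]"
  have "corner n ` Pow {..<n} - {corner n S} = corner n ` (Pow {..<n} - {S})"
    using S inj_on_image_set_diff[OF inj_on_corner, of "Pow {..<n}" "{S}"] by simp
  then have X: "?X = (\<Union>T\<in>Pow {..<n} - {S}. est_up (cube_mdp n) (corner n T) (code S))"
    by (simp add: est_up_trace_def est_up_set_def)
  have "S - {0} \<noteq> S \<or> insert 0 S \<noteq> S" by blast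
  then have "Pow {..<n} - {S} \<noteq> {}" using n S by auto
  then obtain T where T: "T \<in> Pow {..<n} - {S}" by blast
  obtain b where "b \<in> est_up (cube_mdp n) (corner n T) (code S)"
    using est_up_nonempty[OF is_mdp_cube_mdp[OF n]] by blast
  then have "?X \<noteq> {}" unfolding X using T by blast
  moreover have "\<forall>b\<in>?X. exp_risk (cube_mdp n) cube_risk b \<le> (real n - 1) / n"
    unfolding X using exp_risk_other_corner[OF n S] est_up_corner[OF n] by auto
  ultimately have "Sup (exp_risk (cube_mdp n) cube_risk ` ?X) \<le> (real n - 1) / n"
    by (intro cSup_least) auto
  also have "\<dots> < 1" using n by simp
  also have "1 \<le> Risk (cube_mdp n) cube_risk ([0, 0] @ [code S])"
    using Risk_cube_mdp_ge_1[OF n S] by simp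
  finally show ?thesis .
qed

theorem theorem3:
  shows "\<exists>M :: nat \<Rightarrow> mdp. \<forall>n \<ge> 1. is_mdp (M n) \<and>
    (\<exists>\<tau> r. \<tau> \<noteq> [] \<and> set \<tau> \<subseteq> Obs (M n) \<and> (\<forall>s\<in>St (M n). r s \<ge> 0) \<and>
       (let B = Vert (est_MDP (M n) \<tau>) in
          card B = 2 ^ n \<and>
          (\<forall>bel\<in>B. \<exists>\<tau>'. \<tau>' \<noteq> [] \<and> set \<tau>' \<subseteq> Obs (M n) \<and>
              Risk (M n) r (\<tau> @ \<tau>') >
              Sup (exp_risk (M n) r ` est_up_trace (M n) (B - {bel}) \<tau>'))))"
proof (intro exI[of _ cube_mdp] allI impI conjI)
  fix n :: nat assume n: "n \<ge> 1"
  show "is_mdp (cube_mdp n)" using is_mdp_cube_mdp[OF n] .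
  have B: "Vert (est_MDP (cube_mdp n) [0, 0]) = corner n ` Pow {..<n}"
    using est_MDP_cube_mdp[OF n] Vert_cube by simp
  have "\<exists>\<tau>'. \<tau>' \<noteq> [] \<and> set \<tau>' \<subseteq> Obs (cube_mdp n) \<and>
      Risk (cube_mdp n) cube_risk ([0, 0] @ \<tau>') >
      Sup (exp_risk (cube_mdp n) cube_risk `
           est_up_trace (cube_mdp n) (corner n ` Pow {..<n} - {bel}) \<tau>')"
    if bel: "bel \<in> corner n ` Pow {..<n}" for bel
  proof -
    obtain S where S: "S \<subseteq> {..<n}" "bel = corner n S" using bel by blast
    show ?thesis
      using Sup_exp_risk_other_corners_lt_Risk[OF n S(1)] S(1) unfolding S(2)
      by (intro exI[of _ "[code S]"]) auto
  qed
  then show "\<exists>\<tau> r. \<tau> \<noteq> [] \<and> set \<tau> \<subseteq> Obs (cube_mdp n) \<and> (\<forall>s\<in>St (cube_mdp n). r s \<ge> 0) \<and>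
       (let B = Vert (est_MDP (cube_mdp n) \<tau>) in
          card B = 2 ^ n \<and>
          (\<forall>bel\<in>B. \<exists>\<tau>'. \<tau>' \<noteq> [] \<and> set \<tau>' \<subseteq> Obs (cube_mdp n) \<and>
              Risk (cube_mdp n) r (\<tau> @ \<tau>') >
              Sup (exp_risk (cube_mdp n) r ` est_up_trace (cube_mdp n) (B - {bel}) \<tau>')))"
    by (intro exI[of _ "[0, 0]"] exI[of _ cube_risk])
      (simp only: Let_def B, simp add: card_corners cube_risk_def)
qed

end
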